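(* All connected graphs on at least three vertices are reconstructible if and only if all connected graphs $G$ on at least three vertices with $\gamma(G)=2$ or $\operatorname{diam}(G)=\operatorname{diam}(\overline{G})=2$ are reconstructible.
   Context: All graphs are finite, simple and undirected. $\gamma(G)$ denotes the domination number, $\operatorname{diam}(G)$ the diameter (infinite if $G$ is disconnected), and $\overline{G}$ the complement of $G$. For a vertex $v$, the card $G-v$ is the unlabeled graph obtained by deleting $v$; the deck $\mathscr{D}(G)$ is the multiset of all cards of $G$ up to isomorphism. $G$ is reconstructible if every graph $H$ with $\mathscr{D}(H)=\mathscr{D}(G)$ is isomorphic to $G$. *)

theory Defs
  imports Main "HOL-Library.Multiset" "HOL-Library.Extended_Nat"
begin

type_synonym ugraph = "nat set \<times> nat set set"

definition verts :: "ugraph \<Rightarrow> nat set" where "verts G = fst G"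
definition edges :: "ugraph \<Rightarrow> nat set set" where "edges G = snd G"

definition simple_graph :: "ugraph \<Rightarrow> bool" where
  "simple_graph G \<longleftrightarrow> finite (verts G) \<and>
     (\<forall>e\<in>edges G. \<exists>u v. e = {u, v} \<and> u \<noteq> v \<and> u \<in> verts G \<and> v \<in> verts G)"

definition adj :: "ugraph \<Rightarrow> nat \<Rightarrow> nat \<Rightarrow> bool" where
  "adj G u v \<longleftrightarrow> u \<noteq> v \<and> {u, v} \<in> edges G"

definition graph_iso :: "ugraph \<Rightarrow> ugraph \<Rightarrow> bool" where
  "graph_iso G H \<longleftrightarrow> (\<exists>f. bij_betw f (verts G) (verts H) \<and>
     (\<forall>u\<in>verts G. \<forall>v\<in>verts G. adj G u v \<longleftrightarrow> adj H (f u) (f v)))"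

text \<open>Isomorphism class of a graph (the unlabeled graph).\<close>
definition iso_class :: "ugraph \<Rightarrow> ugraph set" where
  "iso_class G = {H. simple_graph H \<and> graph_iso H G}"

definition card_del :: "ugraph \<Rightarrow> nat \<Rightarrow> ugraph" where
  "card_del G v = (verts G - {v}, {e \<in> edges G. v \<notin> e})"

definition deck :: "ugraph \<Rightarrow> ugraph set multiset" where
  "deck G = image_mset (\<lambda>v. iso_class (card_del G v)) (mset_set (verts G))"

definition reconstructible :: "ugraph \<Rightarrow> bool" where
  "reconstructible G \<longleftrightarrow>
     (\<forall>H. simple_graph H \<and> deck H = deck G \<longrightarrow> graph_iso H G)"

definition complement :: "ugraph \<Rightarrow> ugraph" where
  "complement G = (verts G,
     {{u, v} | u v. u \<in> verts G \<and> v \<in> verts G \<and> u \<noteq> v \<and> \<not> adj G u v})"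

definition walk :: "ugraph \<Rightarrow> nat list \<Rightarrow> bool" where
  "walk G xs \<longleftrightarrow> xs \<noteq> [] \<and> set xs \<subseteq> verts G \<and>
     (\<forall>i. Suc i < length xs \<longrightarrow> adj G (xs ! i) (xs ! Suc i))"

definition connected :: "ugraph \<Rightarrow> bool" where
  "connected G \<longleftrightarrow> verts G \<noteq> {} \<and>
     (\<forall>u\<in>verts G. \<forall>v\<in>verts G. \<exists>xs. walk G xs \<and> hd xs = u \<and> last xs = v)"

definition dist :: "ugraph \<Rightarrow> nat \<Rightarrow> nat \<Rightarrow> enat" where
  "dist G u v = (if \<exists>xs. walk G xs \<and> hd xs = u \<and> last xs = v
     then enat (LEAST k. \<exists>xs. walk G xs \<and> hd xs = u \<and> last xs = v \<and> length xs = Suc k)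
     else \<infinity>)"

text \<open>Diameter (\<infinity> if disconnected).\<close>
definition diam :: "ugraph \<Rightarrow> enat" where
  "diam G = (SUP u\<in>verts G. SUP v\<in>verts G. dist G u v)"

definition dominating :: "ugraph \<Rightarrow> nat set \<Rightarrow> bool" where
  "dominating G D \<longleftrightarrow> D \<subseteq> verts G \<and>
     (\<forall>v\<in>verts G. v \<in> D \<or> (\<exists>u\<in>D. adj G u v))"

definition domination_number :: "ugraph \<Rightarrow> nat" where
  "domination_number G = Min {card D | D. dominating G D}"

end

theory Submission
  imports Defs
begin

text \<open>A graph G on n \<ge> 3 vertices with a dominating vertex v is reconstructible: by Kelly's
  count the deck determines the number of edges, hence the degree of the vertex deleted from
  each card; so if H has the same deck, the card G - v is some H - w with w of degree n - 1,
  and an isomorphism H - w \<cong> G - v extends by w \<mapsto> v. The deck of the complement is a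
  function of the deck, so G is reconstructible as soon as its complement is. Now let G be
  connected with neither a dominating vertex nor a dominating pair. Then any two vertices
  have a common non-neighbour, so the complement is connected and has diameter 2. If two
  vertices of G have no common neighbour they dominate the complement, whose domination
  number is then 2; otherwise G has diameter 2.\<close>

lemma adj_commute: "adj G u v \<longleftrightarrow> adj G v u"
  unfolding adj_def by (auto simp: insert_commute)

lemma adj_irrefl [simp]: "\<not> adj G v v"
  unfolding adj_def by simp

lemma simple_graph_finite_verts: "simple_graph G \<Longrightarrow> finite (verts G)"
  unfolding simple_graph_def by simp

lemma simple_graph_finite_edges:
  assumes "simple_graph G" shows "finite (edges G)"
proof (rule finite_subset)
  show "edges G \<subseteq> Pow (verts G)" using assms unfolding simple_graph_def by auto
  show "finite (Pow (verts G))" using assms by (simp add: simple_graph_finite_verts)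
qed

lemma simple_graph_edgeE:
  assumes "simple_graph G" "e \<in> edges G"
  obtains u v where "e = {u, v}" "u \<noteq> v" "u \<in> verts G" "v \<in> verts G"
  using assms unfolding simple_graph_def by meson

lemma adj_in_verts: "simple_graph G \<Longrightarrow> adj G u v \<Longrightarrow> u \<in> verts G \<and> v \<in> verts G"
  unfolding adj_def simple_graph_def by (auto simp: doubleton_eq_iff)

lemma graph_iso_refl: "graph_iso G G"
  unfolding graph_iso_def by (rule exI[of _ id]) auto

lemma graph_iso_sym:
  assumes "graph_iso G H" shows "graph_iso H G"
proof -
  obtain f where f: "bij_betw f (verts G) (verts H)"
    and f_adj: "\<forall>u\<in>verts G. \<forall>v\<in>verts G. adj G u v \<longleftrightarrow> adj H (f u) (f v)"
    using assms unfolding graph_iso_def by blast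
  let ?g = "inv_into (verts G) f"
  have g: "bij_betw ?g (verts H) (verts G)" using f by (rule bij_betw_inv_into)
  have "adj H u v \<longleftrightarrow> adj G (?g u) (?g v)" if "u \<in> verts H" "v \<in> verts H" for u v
    using f_adj bij_betw_apply[OF g] that bij_betw_inv_into_right[OF f] by metis
  then show ?thesis using g unfolding graph_iso_def by blast
qed

lemma graph_iso_trans:
  assumes "graph_iso G H" "graph_iso H K" shows "graph_iso G K"
proof -
  obtain f where f: "bij_betw f (verts G) (verts H)"
    and f_adj: "\<forall>u\<in>verts G. \<forall>v\<in>verts G. adj G u v \<longleftrightarrow> adj H (f u) (f v)"
    using assms(1) unfolding graph_iso_def by blast
  obtain g where g: "bij_betw g (verts H) (verts K)"
    and g_adj: "\<forall>u\<in>verts H. \<forall>v\<in>verts H. adj H u v \<longleftrightarrow> adj K (g u) (g v)"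
    using assms(2) unfolding graph_iso_def by blast
  have "bij_betw (g \<circ> f) (verts G) (verts K)" using f g by (rule bij_betw_trans)
  moreover have "\<forall>u\<in>verts G. \<forall>v\<in>verts G. adj G u v \<longleftrightarrow> adj K ((g \<circ> f) u) ((g \<circ> f) v)"
    using f_adj g_adj bij_betw_apply[OF f] by simp
  ultimately show ?thesis unfolding graph_iso_def by blast
qed

lemma graph_iso_card_edges_le:
  assumes A: "simple_graph A" and B: "simple_graph B" and iso: "graph_iso A B"
  shows "card (edges A) \<le> card (edges B)"
proof -
  obtain f where f: "bij_betw f (verts A) (verts B)"
    and f_adj: "\<forall>u\<in>verts A. \<forall>v\<in>verts A. adj A u v \<longleftrightarrow> adj B (f u) (f v)"
    using iso unfolding graph_iso_def by blast
  have "edges A \<subseteq> Pow (verts A)" using A unfolding simple_graph_def by auto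
  then have inj: "inj_on (image f) (edges A)"
    using f inj_on_image_Pow inj_on_subset unfolding bij_betw_def by blast
  have "f ` e \<in> edges B" if e: "e \<in> edges A" for e
  proof -
    obtain u v where uv: "e = {u, v}" "u \<noteq> v" "u \<in> verts A" "v \<in> verts A"
      using simple_graph_edgeE[OF A e] .
    then have "adj B (f u) (f v)" using e f_adj unfolding adj_def by blast
    then show ?thesis using uv unfolding adj_def by simp
  qed
  then show ?thesis
    using card_inj_on_le[OF inj _ simple_graph_finite_edges[OF B]] by blast
qed

lemma graph_iso_card_edges:
  assumes "simple_graph A" "simple_graph B" "graph_iso A B"
  shows "card (edges A) = card (edges B)"
  using graph_iso_card_edges_le[OF assms]
    graph_iso_card_edges_le[OF assms(2,1) graph_iso_sym[OF assms(3)]]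
  by simp

lemma iso_class_eq_iff:
  assumes "simple_graph A" "simple_graph B"
  shows "iso_class A = iso_class B \<longleftrightarrow> graph_iso A B"
  unfolding iso_class_def using assms graph_iso_refl graph_iso_sym graph_iso_trans by blast

lemma some_iso_class:
  assumes "simple_graph A"
  shows "simple_graph (SOME B. B \<in> iso_class A) \<and> graph_iso (SOME B. B \<in> iso_class A) A"
proof -
  have "A \<in> iso_class A" using assms graph_iso_refl unfolding iso_class_def by blast
  then have "(SOME B. B \<in> iso_class A) \<in> iso_class A" by (rule someI)
  then show ?thesis unfolding iso_class_def by blast
qed

lemma verts_card_del [simp]: "verts (card_del G v) = verts G - {v}"
  unfolding card_del_def verts_def by simp

lemma edges_card_del: "edges (card_del G v) = {e \<in> edges G. v \<notin> e}"
  unfolding card_del_def edges_def by simp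

lemma adj_card_del: "adj (card_del G v) a b \<longleftrightarrow> adj G a b \<and> a \<noteq> v \<and> b \<noteq> v"
  unfolding adj_def card_del_def edges_def by auto

lemma simple_graph_card_del:
  assumes "simple_graph G" shows "simple_graph (card_del G v)"
  using assms unfolding simple_graph_def verts_card_del edges_card_del by fastforce

section \<open>Kelly's edge count and dominating vertices\<close>

text \<open>Classes occurring in a deck are nonempty and isomorphic graphs have equally many
  edges, so the choice of representative does not matter.\<close>

definition class_edge_count :: "ugraph set \<Rightarrow> nat" where
  "class_edge_count C = card (edges (SOME A. A \<in> C))"

lemma class_edge_count_iso_class:
  assumes "simple_graph A" shows "class_edge_count (iso_class A) = card (edges A)"
  unfolding class_edge_count_def using some_iso_class[OF assms] graph_iso_card_edges assms by blast

lemma size_deck: "simple_graph G \<Longrightarrow> size (deck G) = card (verts G)"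
  unfolding deck_def by (simp add: simple_graph_finite_verts)

lemma card_non_incident_edges:
  assumes G: "simple_graph G" and e: "e \<in> edges G"
  shows "card {v \<in> verts G. v \<notin> e} = card (verts G) - 2"
proof -
  obtain u v where uv: "e = {u, v}" "u \<noteq> v" "u \<in> verts G" "v \<in> verts G"
    using simple_graph_edgeE[OF G e] .
  have "{x \<in> verts G. x \<notin> e} = verts G - e" by blast
  then show ?thesis
    using uv simple_graph_finite_verts[OF G] by (simp add: card_Diff_subset)
qed

text \<open>Kelly's lemma: every edge survives in exactly n - 2 cards.\<close>

lemma sum_deck_class_edge_count:
  assumes G: "simple_graph G"
  shows "(\<Sum>C\<in>#deck G. class_edge_count C) = card (edges G) * (card (verts G) - 2)"
proof -
  have "(\<Sum>C\<in>#deck G. class_edge_count C)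
      = (\<Sum>v\<in>verts G. class_edge_count (iso_class (card_del G v)))"
    unfolding deck_def image_mset.compositionality sum_unfold_sum_mset by (simp add: comp_def)
  also have "\<dots> = (\<Sum>v\<in>verts G. card (edges (card_del G v)))"
    by (simp add: class_edge_count_iso_class simple_graph_card_del[OF G])
  also have "\<dots> = (\<Sum>v\<in>verts G. \<Sum>e\<in>edges G. if v \<notin> e then 1 else 0)"
    unfolding edges_card_del card_eq_sum
    by (simp only: sum.inter_filter[OF simple_graph_finite_edges[OF G]])
  also have "\<dots> = (\<Sum>e\<in>edges G. \<Sum>v\<in>verts G. if v \<notin> e then 1 else 0)"
    by (rule sum.swap)
  also have "\<dots> = (\<Sum>e\<in>edges G. card (verts G) - 2)"
    using card_non_incident_edges[OF G]
    unfolding card_eq_sum sum.inter_filter[OF simple_graph_finite_verts[OF G], symmetric]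
    by simp
  finally show ?thesis by simp
qed

lemma deck_eq_card_edges_eq:
  assumes G: "simple_graph G" "3 \<le> card (verts G)"
    and H: "simple_graph H" and deck: "deck H = deck G"
  shows "card (edges H) = card (edges G)"
proof -
  have "card (verts H) = card (verts G)"
    using size_deck[OF G(1)] size_deck[OF H] deck by simp
  then have "card (edges H) * (card (verts G) - 2) = card (edges G) * (card (verts G) - 2)"
    using sum_deck_class_edge_count[OF G(1)] sum_deck_class_edge_count[OF H] deck by metis
  then show ?thesis using G(2) by simp
qed

lemma dominating_singleton:
  "dominating G {v} \<longleftrightarrow> v \<in> verts G \<and> (\<forall>x\<in>verts G. x \<noteq> v \<longrightarrow> adj G v x)"
  unfolding dominating_def by auto

lemma card_edges_card_del:
  assumes "finite (edges G)"
  shows "card (edges G) = card (edges (card_del G v)) + card {e \<in> edges G. v \<in> e}"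
proof -
  have "edges G = {e \<in> edges G. v \<notin> e} \<union> {e \<in> edges G. v \<in> e}" by blast
  also have "card \<dots> = card {e \<in> edges G. v \<notin> e} + card {e \<in> edges G. v \<in> e}"
    using assms by (intro card_Un_disjoint) auto
  finally show ?thesis by (simp add: edges_card_del)
qed

lemma incident_edges_subset:
  assumes "simple_graph G"
  shows "{e \<in> edges G. v \<in> e} \<subseteq> (\<lambda>x. {v, x}) ` (verts G - {v})"
proof
  fix e assume "e \<in> {e \<in> edges G. v \<in> e}"
  then obtain a b where "e = {a, b}" "a \<noteq> b" "a \<in> verts G" "b \<in> verts G" "v \<in> e"
    using simple_graph_edgeE[OF assms] by blast
  then show "e \<in> (\<lambda>x. {v, x}) ` (verts G - {v})" by (auto simp: doubleton_eq_iff)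
qed

lemma dominating_singleton_iff_card_incident_edges:
  assumes G: "simple_graph G" and v: "v \<in> verts G"
  shows "dominating G {v} \<longleftrightarrow> card {e \<in> edges G. v \<in> e} = card (verts G) - 1"
proof -
  let ?star = "(\<lambda>x. {v, x}) ` (verts G - {v})"
  have "inj_on (\<lambda>x. {v, x}) (verts G - {v})" by (auto simp: inj_on_def doubleton_eq_iff)
  then have card_star: "card ?star = card (verts G) - 1"
    using v simple_graph_finite_verts[OF G] by (simp add: card_image)
  have "dominating G {v} \<longleftrightarrow> ?star \<subseteq> {e \<in> edges G. v \<in> e}"
    using v unfolding dominating_singleton adj_def by auto
  also have "\<dots> \<longleftrightarrow> {e \<in> edges G. v \<in> e} = ?star"
    using incident_edges_subset[OF G] by blast
  also have "\<dots> \<longleftrightarrow> card {e \<in> edges G. v \<in> e} = card ?star"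
    using card_subset_eq[OF _ incident_edges_subset[OF G]] simple_graph_finite_verts[OF G]
    by auto
  finally show ?thesis using card_star by simp
qed

lemma adj_dominating_vertex:
  assumes "dominating G {v}" "a \<in> verts G" "b \<in> verts G"
  shows "adj G a b \<longleftrightarrow> a \<noteq> b \<and> (a = v \<or> b = v \<or> adj (card_del G v) a b)"
  using assms unfolding dominating_singleton adj_card_del unfolding adj_def
  by (auto simp: insert_commute)

lemma graph_iso_extend_dominating:
  assumes iso: "graph_iso (card_del H w) (card_del G v)"
    and w: "dominating H {w}" and v: "dominating G {v}"
  shows "graph_iso H G"
proof -
  obtain f where f: "bij_betw f (verts H - {w}) (verts G - {v})"
    and f_adj: "\<forall>a\<in>verts H - {w}. \<forall>b\<in>verts H - {w}.
                  adj (card_del H w) a b \<longleftrightarrow> adj (card_del G v) (f a) (f b)"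
    using iso unfolding graph_iso_def by auto
  define g where "g = f(w := v)"
  have "w \<in> verts H" "v \<in> verts G" using v w by (simp_all add: dominating_singleton)
  have "bij_betw g (verts H - {w}) (verts G - {v})"
    using f bij_betw_cong[of "verts H - {w}" g f] by (simp add: g_def)
  then have "bij_betw g ((verts H - {w}) \<union> {w}) ((verts G - {v}) \<union> {g w})"
    by (rule notIn_Un_bij_betw[rotated 2]) (simp_all add: g_def)
  then have g_bij: "bij_betw g (verts H) (verts G)"
    using \<open>w \<in> verts H\<close> \<open>v \<in> verts G\<close> by (simp add: g_def insert_absorb)
  have g_v: "g a = v \<longleftrightarrow> a = w" if "a \<in> verts H" for a
    using that bij_betw_apply[OF f] by (auto simp: g_def)
  have g_inj: "g a = g b \<longleftrightarrow> a = b" if "a \<in> verts H" "b \<in> verts H" for a b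
    using g_bij that unfolding bij_betw_def inj_on_def by blast
  have "adj H a b \<longleftrightarrow> adj G (g a) (g b)" if a: "a \<in> verts H" and b: "b \<in> verts H" for a b
  proof -
    have "adj (card_del H w) a b \<longleftrightarrow> adj (card_del G v) (g a) (g b)" if "a \<noteq> w" "b \<noteq> w"
      using f_adj a b that by (simp add: g_def)
    then show ?thesis
      unfolding adj_dominating_vertex[OF w a b]
        adj_dominating_vertex[OF v bij_betw_apply[OF g_bij a] bij_betw_apply[OF g_bij b]]
      using g_v[OF a] g_v[OF b] g_inj[OF a b] by blast
  qed
  then show ?thesis using g_bij unfolding graph_iso_def by blast
qed

lemma reconstructible_if_dominating_vertex:
  assumes G: "simple_graph G" "3 \<le> card (verts G)" and v: "dominating G {v}"
  shows "reconstructible G"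
  unfolding reconstructible_def
proof (intro allI impI, elim conjE)
  fix H assume H: "simple_graph H" and deck: "deck H = deck G"
  have "v \<in> verts G" using v by (simp add: dominating_singleton)
  then have "iso_class (card_del G v) \<in># deck H"
    using deck simple_graph_finite_verts[OF G(1)] unfolding deck_def by simp
  then obtain w where w: "w \<in> verts H"
    and "iso_class (card_del H w) = iso_class (card_del G v)"
    using simple_graph_finite_verts[OF H] unfolding deck_def by auto
  then have iso: "graph_iso (card_del H w) (card_del G v)"
    using iso_class_eq_iff simple_graph_card_del G H by blast
  have "card (edges (card_del H w)) = card (edges (card_del G v))"
    using graph_iso_card_edges[OF simple_graph_card_del[OF H] simple_graph_card_del[OF G(1)] iso] .
  then have "card {e \<in> edges H. w \<in> e} = card {e \<in> edges G. v \<in> e}"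
    using card_edges_card_del[of G v] card_edges_card_del[of H w]
      deck_eq_card_edges_eq[OF G H deck] simple_graph_finite_edges[OF G(1)]
      simple_graph_finite_edges[OF H]
    by simp
  also have "\<dots> = card (verts G) - 1"
    using dominating_singleton_iff_card_incident_edges[OF G(1) \<open>v \<in> verts G\<close>] v by simp
  also have "\<dots> = card (verts H) - 1"
    using size_deck[OF G(1)] size_deck[OF H] deck by simp
  finally have "dominating H {w}"
    using dominating_singleton_iff_card_incident_edges[OF H w] by simp
  then show "graph_iso H G" using graph_iso_extend_dominating[OF iso _ v] by blast
qed

section \<open>Complements\<close>

lemma verts_complement [simp]: "verts (complement G) = verts G"
  unfolding complement_def verts_def by simp

lemma edges_complement:
  "edges (complement G) = {{u, v} | u v. u \<in> verts G \<and> v \<in> verts G \<and> u \<noteq> v \<and> \<not> adj G u v}"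
  unfolding complement_def edges_def verts_def by simp

lemma adj_complement:
  "adj (complement G) u v \<longleftrightarrow> u \<in> verts G \<and> v \<in> verts G \<and> u \<noteq> v \<and> \<not> adj G u v"
proof
  assume "adj (complement G) u v"
  then obtain a b where "{u, v} = {a, b}" "a \<in> verts G" "b \<in> verts G" "a \<noteq> b" "\<not> adj G a b"
    unfolding adj_def edges_complement by blast
  then show "u \<in> verts G \<and> v \<in> verts G \<and> u \<noteq> v \<and> \<not> adj G u v"
    by (auto simp: doubleton_eq_iff adj_commute)
qed (auto simp: adj_def edges_complement)

lemma simple_graph_complement: "simple_graph G \<Longrightarrow> simple_graph (complement G)"
  unfolding simple_graph_def verts_complement edges_complement by blast

lemma graph_eqI: "verts G = verts H \<Longrightarrow> edges G = edges H \<Longrightarrow> G = H"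
  unfolding verts_def edges_def by (simp add: prod_eq_iff)

lemma edges_eq_adj:
  assumes "simple_graph G" "simple_graph H" and "\<And>u v. adj G u v \<longleftrightarrow> adj H u v"
  shows "edges G = edges H"
proof -
  have "e \<in> edges H" if G: "simple_graph G" and e: "e \<in> edges G"
    and adj: "\<And>u v. adj G u v \<Longrightarrow> adj H u v" for G H e
  proof -
    obtain u v where "e = {u, v}" "u \<noteq> v" using simple_graph_edgeE[OF G e] by metis
    then show ?thesis using adj[of u v] e unfolding adj_def by simp
  qed
  then show ?thesis using assms by blast
qed

lemma complement_complement:
  assumes "simple_graph G" shows "complement (complement G) = G"
proof (rule graph_eqI)
  have "adj (complement (complement G)) u v \<longleftrightarrow> adj G u v" for u v
    using adj_in_verts[OF assms] by (auto simp: adj_complement)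
  then show "edges (complement (complement G)) = edges G"
    by (rule edges_eq_adj[OF simple_graph_complement[OF simple_graph_complement[OF assms]] assms])
qed simp

lemma card_del_complement: "card_del (complement G) v = complement (card_del G v)"
  by (rule graph_eqI) (auto simp: edges_card_del edges_complement adj_card_del)

lemma graph_iso_complement:
  assumes "graph_iso A B" shows "graph_iso (complement A) (complement B)"
proof -
  obtain f where f: "bij_betw f (verts A) (verts B)"
    and f_adj: "\<forall>u\<in>verts A. \<forall>v\<in>verts A. adj A u v \<longleftrightarrow> adj B (f u) (f v)"
    using assms unfolding graph_iso_def by blast
  have "f u = f v \<longleftrightarrow> u = v" if "u \<in> verts A" "v \<in> verts A" for u v
    using f that unfolding bij_betw_def inj_on_def by blast
  then have "\<forall>u\<in>verts A. \<forall>v\<in>verts A.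
      adj (complement A) u v \<longleftrightarrow> adj (complement B) (f u) (f v)"
    using f_adj bij_betw_apply[OF f] unfolding adj_complement by blast
  then show ?thesis using f unfolding graph_iso_def verts_complement by blast
qed

definition complement_class :: "ugraph set \<Rightarrow> ugraph set" where
  "complement_class C = iso_class (complement (SOME A. A \<in> C))"

lemma complement_class_iso_class:
  assumes "simple_graph A"
  shows "complement_class (iso_class A) = iso_class (complement A)"
  unfolding complement_class_def
  using some_iso_class[OF assms] assms iso_class_eq_iff simple_graph_complement graph_iso_complement
  by metis

lemma deck_complement:
  assumes "simple_graph G"
  shows "deck (complement G) = image_mset complement_class (deck G)"
  unfolding deck_def image_mset.compositionality verts_complement card_del_complement
  by (rule image_mset_cong) (simp add: complement_class_iso_class simple_graph_card_del[OF assms])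

lemma reconstructible_if_reconstructible_complement:
  assumes G: "simple_graph G" and rec: "reconstructible (complement G)"
  shows "reconstructible G"
  unfolding reconstructible_def
proof (intro allI impI, elim conjE)
  fix H assume H: "simple_graph H" and "deck H = deck G"
  then have "deck (complement H) = deck (complement G)"
    using deck_complement G by simp
  then have "graph_iso (complement H) (complement G)"
    using rec simple_graph_complement[OF H] unfolding reconstructible_def by blast
  then have "graph_iso (complement (complement H)) (complement (complement G))"
    by (rule graph_iso_complement)
  then show "graph_iso H G" using complement_complement G H by simp
qed

section \<open>Distance and domination\<close>

lemma walk_singleton: "u \<in> verts G \<Longrightarrow> walk G [u]"
  unfolding walk_def by simp

lemma walk_edge: "simple_graph G \<Longrightarrow> adj G u v \<Longrightarrow> walk G [u, v]"
  using adj_in_verts[of G u v] unfolding walk_def by (auto simp: less_Suc_eq)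

lemma walk_path2: "simple_graph G \<Longrightarrow> adj G u w \<Longrightarrow> adj G w v \<Longrightarrow> walk G [u, w, v]"
  using adj_in_verts[of G u w] adj_in_verts[of G w v] unfolding walk_def
  by (auto simp: less_Suc_eq)

lemma walk_length_ge_3:
  assumes xs: "walk G xs" "hd xs = u" "last xs = v" and "u \<noteq> v" "\<not> adj G u v"
  shows "3 \<le> length xs"
proof (rule ccontr)
  assume "\<not> 3 \<le> length xs"
  moreover have "xs \<noteq> []" using xs unfolding walk_def by simp
  ultimately consider a where "xs = [a]" | a b where "xs = [a, b]"
    by (cases xs; cases "tl xs") (auto simp: Suc_le_eq)
  then show False
  proof cases
    case (2 a b)
    then have "adj G a b" using xs(1) unfolding walk_def by force
    then show False using xs assms(4,5) 2 by simp
  qed (use xs assms(4) in simp)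
qed

lemma dist_le_walk:
  assumes "walk G xs" "hd xs = u" "last xs = v"
  shows "dist G u v \<le> enat (length xs - 1)"
proof -
  have "xs \<noteq> []" using assms(1) unfolding walk_def by simp
  then have "(LEAST k. \<exists>xs. walk G xs \<and> hd xs = u \<and> last xs = v \<and> length xs = Suc k)
      \<le> length xs - 1"
    using assms by (intro Least_le) auto
  then show ?thesis using assms unfolding dist_def by auto
qed

lemma two_le_dist:
  assumes "u \<noteq> v" "\<not> adj G u v"
  shows "2 \<le> dist G u v"
proof (cases "\<exists>xs. walk G xs \<and> hd xs = u \<and> last xs = v")
  case True
  then have "\<exists>k xs. walk G xs \<and> hd xs = u \<and> last xs = v \<and> length xs = Suc k"
    by (metis length_greater_0_conv Suc_pred walk_def)
  then have "2 \<le> (LEAST k. \<exists>xs. walk G xs \<and> hd xs = u \<and> last xs = v \<and> length xs = Suc k)"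
    by (rule LeastI2_ex) (use walk_length_ge_3 assms in fastforce)
  then show ?thesis using True unfolding dist_def by (simp add: numeral_eq_enat)
next
  case False
  then show ?thesis unfolding dist_def by (simp only: if_False) simp
qed

lemma diam_eq_2I:
  assumes G: "simple_graph G"
    and near: "\<forall>u\<in>verts G. \<forall>v\<in>verts G. u \<noteq> v \<longrightarrow> adj G u v \<or> (\<exists>w. adj G u w \<and> adj G w v)"
    and far: "u \<in> verts G" "v \<in> verts G" "u \<noteq> v" "\<not> adj G u v"
  shows "diam G = 2"
proof (rule antisym)
  have "dist G a b \<le> 2" if a: "a \<in> verts G" and b: "b \<in> verts G" for a b
  proof -
    obtain xs where xs: "walk G xs" "hd xs = a" "last xs = b" and "length xs \<le> 3"
    proof -
      consider "a = b" | "adj G a b" | w where "adj G a w" "adj G w b" using near a b by blast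
      then show thesis
      proof cases
        case 1
        then show thesis using that[OF walk_singleton[OF a]] by simp
      next
        case 2
        then show thesis using that[OF walk_edge[OF G 2]] by simp
      next
        case 3
        then show thesis using that[OF walk_path2[OF G 3]] by simp
      qed
    qed
    then have "dist G a b \<le> enat (length xs - 1)" by (intro dist_le_walk)
    also have "\<dots> \<le> 2" using \<open>length xs \<le> 3\<close> by (simp add: numeral_eq_enat)
    finally show ?thesis .
  qed
  then show "diam G \<le> 2" unfolding diam_def by (intro SUP_least) simp
  have "2 \<le> dist G u v" using two_le_dist far(3,4) .
  also have "\<dots> \<le> (SUP b\<in>verts G. dist G u b)" by (rule SUP_upper[OF far(2)])
  also have "\<dots> \<le> diam G" unfolding diam_def by (rule SUP_upper[OF far(1)])
  finally show "2 \<le> diam G" .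
qed

lemma connected_ex_adj:
  assumes conn: "connected G" and "2 \<le> card (verts G)" and u: "u \<in> verts G"
  shows "\<exists>x. adj G u x"
proof -
  have "\<not> verts G \<subseteq> {u}"
  proof
    assume "verts G \<subseteq> {u}"
    then have "card (verts G) \<le> 1" using card_mono[of "{u}"] by fastforce
    then show False using assms(2) by simp
  qed
  then obtain x where x: "x \<in> verts G" "x \<noteq> u" by blast
  then obtain xs where xs: "walk G xs" "hd xs = u" "last xs = x"
    using conn u unfolding connected_def by blast
  have "xs \<noteq> []" using xs unfolding walk_def by simp
  then obtain ys where "xs = u # ys" using xs(2) by (cases xs) auto
  then have "ys \<noteq> []" using xs(3) x(2) by auto
  then have "adj G (xs ! 0) (xs ! 1)" using xs(1) \<open>xs = u # ys\<close> unfolding walk_def by auto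
  then show ?thesis using \<open>xs = u # ys\<close> by auto
qed

lemma domination_number_eq_2:
  assumes G: "simple_graph G" and no_vertex: "\<forall>x. \<not> dominating G {x}"
    and pair: "dominating G {a, b}"
  shows "domination_number G = 2"
proof -
  let ?S = "{card D | D. dominating G D}"
  have "?S \<subseteq> card ` Pow (verts G)" unfolding dominating_def by blast
  then have "finite ?S"
    using simple_graph_finite_verts[OF G] by (meson finite_Pow_iff finite_imageI finite_subset)
  moreover have "2 \<in> ?S" using pair no_vertex by (cases "a = b") force+
  moreover have "2 \<le> card D" if D: "dominating G D" for D
  proof -
    have "a \<in> verts G" using pair unfolding dominating_def by simp
    then have "D \<noteq> {}" using D unfolding dominating_def by auto
    moreover have "finite D" using D simple_graph_finite_verts[OF G] unfolding dominating_def
      by (meson finite_subset)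
    moreover have "card D \<noteq> 1" using D no_vertex by (metis card_1_singletonE)
    ultimately show ?thesis using card_gt_0_iff[of D] by linarith
  qed
  ultimately show ?thesis unfolding domination_number_def by (intro Min_eqI) auto
qed

section \<open>Graphs without a dominating vertex or pair\<close>

lemma complement_common_neighbour:
  assumes no_pair: "\<forall>a b. \<not> dominating G {a, b}" and a: "a \<in> verts G" and b: "b \<in> verts G"
  obtains w where "adj (complement G) a w" "adj (complement G) w b"
proof -
  obtain w where "w \<in> verts G" "w \<noteq> a" "w \<noteq> b" "\<not> adj G a w" "\<not> adj G b w"
    using no_pair a b unfolding dominating_def by blast
  then show thesis using that a b adj_commute[of G b w] by (auto simp: adj_complement)
qed

lemma connected_complement:
  assumes G: "simple_graph G" and "verts G \<noteq> {}" and no_pair: "\<forall>a b. \<not> dominating G {a, b}"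
  shows "connected (complement G)"
  unfolding connected_def verts_complement
proof (intro conjI ballI)
  fix a b assume a: "a \<in> verts G" and b: "b \<in> verts G"
  obtain w where "adj (complement G) a w" "adj (complement G) w b"
    using complement_common_neighbour[OF no_pair a b] .
  then have "walk (complement G) [a, w, b]"
    by (intro walk_path2 simple_graph_complement[OF G])
  then show "\<exists>xs. walk (complement G) xs \<and> hd xs = a \<and> last xs = b" by fastforce
qed fact

lemma diam_complement_eq_2:
  assumes G: "simple_graph G" and no_pair: "\<forall>a b. \<not> dominating G {a, b}" and "adj G x y"
  shows "diam (complement G) = 2"
proof (rule diam_eq_2I[OF simple_graph_complement[OF G]])
  show "\<forall>a\<in>verts (complement G). \<forall>b\<in>verts (complement G). a \<noteq> b \<longrightarrow>
      adj (complement G) a b \<or> (\<exists>w. adj (complement G) a w \<and> adj (complement G) w b)"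
    using complement_common_neighbour[OF no_pair] by (metis verts_complement)
  show "x \<in> verts (complement G)" "y \<in> verts (complement G)" "x \<noteq> y"
    "\<not> adj (complement G) x y"
    using adj_in_verts[OF G \<open>adj G x y\<close>] \<open>adj G x y\<close> by (auto simp: adj_complement)
qed

lemma dominating_complement_pair:
  assumes "u \<in> verts G" "v \<in> verts G" "\<forall>w. \<not> (adj G u w \<and> adj G w v)"
  shows "dominating (complement G) {u, v}"
  using assms unfolding dominating_def by (auto simp: adj_complement adj_commute)

lemma not_dominating_complement:
  assumes "simple_graph G" "adj G x y"
  shows "\<not> dominating (complement G) {x}"
proof
  assume "dominating (complement G) {x}"
  moreover have "y \<in> verts G" "y \<noteq> x" using adj_in_verts[OF assms] assms(2) by auto
  ultimately have "adj (complement G) x y" unfolding dominating_singleton by simp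
  then show False using assms(2) by (simp add: adj_complement)
qed

lemma connected_graph_cases:
  assumes G: "simple_graph G" "connected G" "2 \<le> card (verts G)"
  obtains v where "dominating G {v}"
  | "domination_number G = 2"
  | "diam G = 2" "diam (complement G) = 2"
  | "connected (complement G)" "domination_number (complement G) = 2"
proof -
  have ne: "verts G \<noteq> {}" using G(2) unfolding connected_def by simp
  have nbr: "\<exists>y. adj G x y" if "x \<in> verts G" for x
    using connected_ex_adj[OF G(2,3) that] .
  show thesis
  proof (cases "\<exists>v. dominating G {v}")
    case True
    then show thesis using that(1) by blast
  next
    case no_vertex: False
    show thesis
    proof (cases "\<exists>a b. dominating G {a, b}")
      case True
      then show thesis using that(2) domination_number_eq_2[OF G(1)] no_vertex by blast
    next
      case no_pair: False
      show thesis
      proof (cases "\<exists>u\<in>verts G. \<exists>v\<in>verts G. \<forall>w. \<not> (adj G u w \<and> adj G w v)")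
        case True
        then obtain u v where "u \<in> verts G" "v \<in> verts G" "\<forall>w. \<not> (adj G u w \<and> adj G w v)"
          by blast
        then have "domination_number (complement G) = 2"
          using domination_number_eq_2[OF simple_graph_complement[OF G(1)]]
            dominating_complement_pair not_dominating_complement[OF G(1)] nbr
          by (metis dominating_singleton verts_complement)
        then show thesis using that(4) connected_complement[OF G(1) ne] no_pair by blast
      next
        case False
        obtain x where x: "x \<in> verts G" using ne by blast
        then obtain y where "y \<in> verts G" "x \<noteq> y" "\<not> adj G x y"
          using no_vertex unfolding dominating_singleton by blast
        then have "diam G = 2" using False diam_eq_2I[OF G(1) _ x] by blast
        moreover obtain z where "adj G x z" using nbr x by blast
        ultimately show thesis
          using that(3) diam_complement_eq_2[OF G(1)] no_pair by blast
      qed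
    qed
  qed
qed

theorem theorem5:
  shows "(\<forall>G. simple_graph G \<and> connected G \<and> card (verts G) \<ge> 3 \<longrightarrow> reconstructible G)
     \<longleftrightarrow>
     (\<forall>G. simple_graph G \<and> connected G \<and> card (verts G) \<ge> 3 \<and>
          (domination_number G = 2 \<or> (diam G = 2 \<and> diam (complement G) = 2))
          \<longrightarrow> reconstructible G)"
  (is "?all \<longleftrightarrow> ?special")
proof
  assume ?all then show ?special by blast
next
  assume special: ?special
  show ?all
  proof (intro allI impI, elim conjE)
    fix G assume G: "simple_graph G" "connected G" "3 \<le> card (verts G)"
    have "2 \<le> card (verts G)" using G(3) by simp
    with G(1,2) show "reconstructible G"
    proof (cases rule: connected_graph_cases)
      case (1 v)
      then show ?thesis using reconstructible_if_dominating_vertex G by blast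
    next
      case 2
      then show ?thesis using G by (intro special[rule_format]) simp
    next
      case 3
      then show ?thesis using G by (intro special[rule_format]) simp
    next
      case 4
      then have "reconstructible (complement G)"
        using simple_graph_complement[OF G(1)] G(3) by (intro special[rule_format]) simp
      then show ?thesis using reconstructible_if_reconstructible_complement G(1) by blast
    qed
  qed
qed

end
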